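(* Let $G$ be one of the groups $\mathrm{GU}_{2n}(q)$, $\mathrm{GU}_{2n+1}(q)$, $\mathrm{SO}_{2n+1}(q)$, $\mathrm{Sp}_{2n}(q)$ with $n\ge1$, viewed as a finite group with split $BN$-pair as described in the context. Let $L$ and $M$ be pure Levi subgroups of $G$ and let $x\in N$. Then $xLx^{-1}\cap M$ is a pure Levi subgroup of $G$.
   Context: Let $q$ be a power of a prime $p$. For $n\ge1$ the groups $G=\mathrm{GU}_{2n}(q)$, $\mathrm{GU}_{2n+1}(q)$, $\mathrm{SO}_{2n+1}(q)$, $\mathrm{Sp}_{2n}(q)$ have a natural split $BN$-pair of characteristic $p$ whose Weyl group $W=N/(B\cap N)$ is of type $B_n$, with simple reflections $S=\{s_1,\dots,s_n\}$ numbered so that $s_1,s_2$ are joined by the double edge of the Coxeter diagram and $s_i,s_{i+1}$ by a simple edge for $i\ge2$. For $I\subseteq S$ let $L_I$ denote the corresponding standard Levi subgroup. A subset $I\subseteq S$ is left connected if $I=\{s_1,\dots,s_r\}$ for some $0\le r\le n$. A Levi subgroup $L$ of $G$ is called pure if it is conjugate under $N$ to a standard Levi subgroup $L_I$ with $I$ left connected. *)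

theory Defs
  imports "Jordan_Normal_Form.Matrix" "Jordan_Normal_Form.Determinant"
begin

text \<open>For the unitary groups the matrix entries lie in a field
  with q^2 elements and the field involution is a \<mapsto> a^q.\<close>

datatype ctype = GU_even | GU_odd | SO_odd | Sp_even

fun cdim :: "ctype \<Rightarrow> nat \<Rightarrow> nat" where
  "cdim GU_even n = 2 * n"
| "cdim GU_odd n = 2 * n + 1"
| "cdim SO_odd n = 2 * n + 1"
| "cdim Sp_even n = 2 * n"

definition antidiag_one :: "nat \<Rightarrow> 'k::field mat" where
  "antidiag_one m = mat m m (\<lambda>(i,j). if i + j = m - 1 then 1 else 0)"

definition symp_form :: "nat \<Rightarrow> 'k::field mat" where
  "symp_form n = mat (2*n) (2*n)
     (\<lambda>(i,j). if i + j = 2*n - 1 then (if i < n then 1 else -1) else 0)"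

definition qform :: "nat \<Rightarrow> 'k::field vec \<Rightarrow> 'k" where
  "qform n v = (\<Sum>i<n. v $ i * v $ (2*n - i)) + v $ n * v $ n"

definition conj_transp :: "nat \<Rightarrow> 'k::field mat \<Rightarrow> 'k mat" where
  "conj_transp q A = transpose_mat (map_mat (\<lambda>a. a ^ q) A)"

fun classical_group :: "ctype \<Rightarrow> nat \<Rightarrow> nat \<Rightarrow> 'k::field mat set" where
  "classical_group GU_even n q =
     {A \<in> carrier_mat (2*n) (2*n). conj_transp q A * antidiag_one (2*n) * A = antidiag_one (2*n)}"
| "classical_group GU_odd n q =
     {A \<in> carrier_mat (2*n+1) (2*n+1).
        conj_transp q A * antidiag_one (2*n+1) * A = antidiag_one (2*n+1)}"
| "classical_group SO_odd n q =
     {A \<in> carrier_mat (2*n+1) (2*n+1). det A = 1 \<and>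
        (\<forall>v \<in> carrier_vec (2*n+1). qform n (A *\<^sub>v v) = qform n v)}"
| "classical_group Sp_even n q =
     {A \<in> carrier_mat (2*n) (2*n). transpose_mat A * symp_form n * A = symp_form n}"

definition monomial_mat :: "nat \<Rightarrow> 'k::field mat \<Rightarrow> bool" where
  "monomial_mat m A \<longleftrightarrow> A \<in> carrier_mat m m \<and>
     (\<forall>i<m. \<exists>!j. j < m \<and> A $$ (i,j) \<noteq> 0) \<and>
     (\<forall>j<m. \<exists>!i. i < m \<and> A $$ (i,j) \<noteq> 0)"

text \<open>The group N of the natural split BN-pair: the monomial matrices in G
  (normaliser of the diagonal torus T = B \<inter> N; B = upper triangular matrices in G).\<close>
definition Ngrp :: "ctype \<Rightarrow> nat \<Rightarrow> nat \<Rightarrow> 'k::field mat set" where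
  "Ngrp ty n q = {A \<in> classical_group ty n q. monomial_mat (cdim ty n) A}"

text \<open>Standard Levi subgroup L_I for the left connected I = {s_1,...,s_r}.
  With the ordering of the basis used above (Borel = upper triangular), s_1 is the node
  of the double edge (corresponding to the middle block), and L_I consists of the
  elements of G that are diagonal on the first and last n - r coordinates and arbitrary
  on the central block of size m - 2(n-r).\<close>
definition std_levi :: "ctype \<Rightarrow> nat \<Rightarrow> nat \<Rightarrow> nat \<Rightarrow> 'k::field mat set" where
  "std_levi ty n q r = {A \<in> classical_group ty n q.
     \<forall>i < cdim ty n. \<forall>j < cdim ty n.
       i \<noteq> j \<and> (i < n - r \<or> j < n - r \<or> cdim ty n - (n - r) \<le> i \<or> cdim ty n - (n - r) \<le> j)
       \<longrightarrow> A $$ (i,j) = 0}"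

definition conj_set :: "nat \<Rightarrow> 'k::field mat \<Rightarrow> 'k mat set \<Rightarrow> 'k mat set" where
  "conj_set m x H = {x * h * y | h y. h \<in> H \<and> y \<in> carrier_mat m m \<and> x * y = 1\<^sub>m m}"

definition pure_levi :: "ctype \<Rightarrow> nat \<Rightarrow> nat \<Rightarrow> 'k::field mat set \<Rightarrow> bool" where
  "pure_levi ty n q L \<longleftrightarrow>
     (\<exists>x \<in> Ngrp ty n q. \<exists>r \<le> n. L = conj_set (cdim ty n) x (std_levi ty n q r))"

end

theory Submission
  imports Defs
begin

text \<open>Index the basis so that the form pairs the coordinates i and m - 1 - i.  An element of G
  lies in the standard Levi subgroup of an index set S when its off-diagonal entries are
  supported on S \<times> S; the pure standard Levi subgroups are those of the central intervals.
  Conjugating by a monomial matrix w replaces S by its preimage under the permutation of w, and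
  intersecting two such subgroups intersects the index sets.  Monomial elements of G respect the
  pairing (and, in odd dimension, fix the middle index), so the index set of x L x\<inverse> \<inter> M is
  again symmetric and contains the middle index.  Every such set is the image of a central
  interval under a permutation that permutes the pairs without swapping their members, and these
  permutations are realised by monomial elements of G.\<close>

section \<open>Monomial matrices\<close>

definition mono_row :: "nat \<Rightarrow> 'k::field mat \<Rightarrow> nat \<Rightarrow> nat" where
  "mono_row m w j = (THE i. i < m \<and> w $$ (i,j) \<noteq> 0)"

definition mono_col :: "nat \<Rightarrow> 'k::field mat \<Rightarrow> nat \<Rightarrow> nat" where
  "mono_col m w i = (THE j. j < m \<and> w $$ (i,j) \<noteq> 0)"

lemma monomial_mat_carrier: "monomial_mat m w \<Longrightarrow> w \<in> carrier_mat m m"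
  unfolding monomial_mat_def by auto

lemma monomial_mat_col_unique: "monomial_mat m w \<Longrightarrow> j < m \<Longrightarrow> \<exists>!i. i < m \<and> w $$ (i,j) \<noteq> 0"
  by (simp add: monomial_mat_def)

lemma monomial_mat_row_unique: "monomial_mat m w \<Longrightarrow> i < m \<Longrightarrow> \<exists>!j. j < m \<and> w $$ (i,j) \<noteq> 0"
  by (simp add: monomial_mat_def)

lemma mono_row_spec:
  assumes "monomial_mat m w" "j < m"
  shows "mono_row m w j < m" "w $$ (mono_row m w j, j) \<noteq> 0"
  using theI'[OF monomial_mat_col_unique[OF assms]] unfolding mono_row_def by auto

lemma mono_col_spec:
  assumes "monomial_mat m w" "i < m"
  shows "mono_col m w i < m" "w $$ (i, mono_col m w i) \<noteq> 0"
  using theI'[OF monomial_mat_row_unique[OF assms]] unfolding mono_col_def by auto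

lemma mono_row_eq:
  assumes "monomial_mat m w" "i < m" "j < m" "w $$ (i,j) \<noteq> 0"
  shows "mono_row m w j = i"
  unfolding mono_row_def
  using monomial_mat_col_unique[OF assms(1,3)] assms(2,4) by (auto intro!: the1_equality)

lemma mono_col_eq:
  assumes "monomial_mat m w" "i < m" "j < m" "w $$ (i,j) \<noteq> 0"
  shows "mono_col m w i = j"
  unfolding mono_col_def
  using monomial_mat_row_unique[OF assms(1,2)] assms(3,4) by (auto intro!: the1_equality)

lemma monomial_nonzero_iff_row:
  assumes "monomial_mat m w" "i < m" "j < m"
  shows "w $$ (i,j) \<noteq> 0 \<longleftrightarrow> i = mono_row m w j"
  using mono_row_eq[OF assms] mono_row_spec[OF assms(1,3)] by auto

lemma monomial_nonzero_iff_col: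
  assumes "monomial_mat m w" "i < m" "j < m"
  shows "w $$ (i,j) \<noteq> 0 \<longleftrightarrow> j = mono_col m w i"
  using mono_col_eq[OF assms] mono_col_spec[OF assms(1,2)] by auto

lemma mono_row_col: "monomial_mat m w \<Longrightarrow> i < m \<Longrightarrow> mono_row m w (mono_col m w i) = i"
  by (simp add: mono_col_spec mono_row_eq)

lemma mono_col_row: "monomial_mat m w \<Longrightarrow> j < m \<Longrightarrow> mono_col m w (mono_row m w j) = j"
  by (simp add: mono_row_spec mono_col_eq)

lemma monomial_mat_pattern:
  assumes W: "W \<in> carrier_mat m m" and \<rho>: "bij_betw \<rho> {..<m} {..<m}"
    and nz: "\<And>i j. i < m \<Longrightarrow> j < m \<Longrightarrow> W $$ (i,j) \<noteq> 0 \<longleftrightarrow> i = \<rho> j"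
  shows "monomial_mat m W" "\<And>j. j < m \<Longrightarrow> mono_row m W j = \<rho> j"
proof -
  have \<rho>_less: "\<rho> j < m" if "j < m" for j
    using \<rho> that unfolding bij_betw_def by auto
  have \<rho>_inj: "i = j" if "i < m" "j < m" "\<rho> i = \<rho> j" for i j
    using \<rho> that unfolding bij_betw_def inj_on_def by auto
  have "\<exists>!j. j < m \<and> W $$ (i,j) \<noteq> 0" if i: "i < m" for i
  proof -
    obtain j where j: "j < m" "\<rho> j = i"
      using \<rho> i unfolding bij_betw_def by (metis imageE lessThan_iff)
    show ?thesis
    proof (rule ex1I[of _ j])
      show "j < m \<and> W $$ (i,j) \<noteq> 0" using nz[OF i j(1)] j by simp
      show "j' = j" if "j' < m \<and> W $$ (i,j') \<noteq> 0" for j'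
        using \<rho>_inj[of j' j] nz[OF i, of j'] that j by auto
    qed
  qed
  moreover have "\<exists>!i. i < m \<and> W $$ (i,j) \<noteq> 0" if "j < m" for j
    using nz \<rho>_less that by auto
  ultimately show W_mono: "monomial_mat m W"
    unfolding monomial_mat_def using W by blast
  show "mono_row m W j = \<rho> j" if "j < m" for j
    using mono_row_eq[OF W_mono \<rho>_less[OF that] that] nz[OF \<rho>_less[OF that] that] by simp
qed

lemma monomial_mat_transpose_pattern:
  assumes M: "monomial_mat m M" and W: "W \<in> carrier_mat m m"
    and nz: "\<And>i j. i < m \<Longrightarrow> j < m \<Longrightarrow> W $$ (i,j) \<noteq> 0 \<longleftrightarrow> M $$ (j,i) \<noteq> 0"
  shows "monomial_mat m W"
    and "\<And>j. j < m \<Longrightarrow> mono_row m W j = mono_col m M j"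
    and "\<And>i. i < m \<Longrightarrow> mono_col m W i = mono_row m M i"
proof -
  have "\<exists>!j. j < m \<and> W $$ (i,j) \<noteq> 0" if "i < m" for i
  proof -
    have "(\<lambda>j. j < m \<and> W $$ (i,j) \<noteq> 0) = (\<lambda>j. j < m \<and> M $$ (j,i) \<noteq> 0)"
      using nz that by auto
    then show ?thesis using monomial_mat_col_unique[OF M that] by simp
  qed
  moreover have "\<exists>!i. i < m \<and> W $$ (i,j) \<noteq> 0" if "j < m" for j
  proof -
    have "(\<lambda>i. i < m \<and> W $$ (i,j) \<noteq> 0) = (\<lambda>i. i < m \<and> M $$ (j,i) \<noteq> 0)"
      using nz that by auto
    then show ?thesis using monomial_mat_row_unique[OF M that] by simp
  qed
  ultimately show W_mono: "monomial_mat m W"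
    unfolding monomial_mat_def using W by blast
  show "mono_row m W j = mono_col m M j" if "j < m" for j
    using mono_row_eq[OF W_mono mono_col_spec(1)[OF M that] that] nz mono_col_spec[OF M that] that
    by blast
  show "mono_col m W i = mono_row m M i" if "i < m" for i
    using mono_col_eq[OF W_mono that mono_row_spec(1)[OF M that]] nz mono_row_spec[OF M that] that
    by blast
qed

lemma sum_atLeast0_single:
  fixes g :: "nat \<Rightarrow> 'a::comm_monoid_add"
  assumes "k < m" "\<And>i. i < m \<Longrightarrow> i \<noteq> k \<Longrightarrow> g i = 0"
  shows "(\<Sum>i\<in>{0..<m}. g i) = g k"
  using assms by (subst sum.mono_neutral_right[of "{0..<m}" "{k}"]) auto

lemma mult_monomial_index:
  assumes w: "monomial_mat m w" and A: "dim_col A = m" and ij: "i < dim_row A" "j < m"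
  shows "(A * w) $$ (i,j) = A $$ (i, mono_row m w j) * w $$ (mono_row m w j, j)"
proof -
  have "(A * w) $$ (i,j) = (\<Sum>k\<in>{0..<m}. A $$ (i,k) * w $$ (k,j))"
    using A ij monomial_mat_carrier[OF w] by (simp add: scalar_prod_def)
  also have "\<dots> = A $$ (i, mono_row m w j) * w $$ (mono_row m w j, j)"
    by (rule sum_atLeast0_single)
      (use mono_row_spec[OF w ij(2)] monomial_nonzero_iff_row[OF w _ ij(2)] in auto)
  finally show ?thesis .
qed

lemma monomial_mult_index:
  assumes w: "monomial_mat m w" and A: "dim_row A = m" and ij: "i < m" "j < dim_col A"
  shows "(w * A) $$ (i,j) = w $$ (i, mono_col m w i) * A $$ (mono_col m w i, j)"
proof -
  have "(w * A) $$ (i,j) = (\<Sum>k\<in>{0..<m}. w $$ (i,k) * A $$ (k,j))"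
    using A ij monomial_mat_carrier[OF w] by (simp add: scalar_prod_def)
  also have "\<dots> = w $$ (i, mono_col m w i) * A $$ (mono_col m w i, j)"
    by (rule sum_atLeast0_single)
      (use mono_col_spec[OF w ij(1)] monomial_nonzero_iff_col[OF w ij(1)] in auto)
  finally show ?thesis .
qed

lemma monomial_mult_vec_index:
  assumes w: "monomial_mat m w" and v: "v \<in> carrier_vec m" and i: "i < m"
  shows "(w *\<^sub>v v) $ i = w $$ (i, mono_col m w i) * v $ mono_col m w i"
proof -
  have "(w *\<^sub>v v) $ i = (\<Sum>k\<in>{0..<m}. w $$ (i,k) * v $ k)"
    using v i monomial_mat_carrier[OF w] by (simp add: scalar_prod_def)
  also have "\<dots> = w $$ (i, mono_col m w i) * v $ mono_col m w i"
    by (rule sum_atLeast0_single)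
      (use mono_col_spec[OF w i] monomial_nonzero_iff_col[OF w i] in auto)
  finally show ?thesis .
qed

text \<open>Since inverse 0 = 0, entrywise inversion of the transpose inverts a monomial matrix.\<close>

definition mono_inverse :: "nat \<Rightarrow> 'k::field mat \<Rightarrow> 'k mat" where
  "mono_inverse m w = mat m m (\<lambda>(i,j). inverse (w $$ (j,i)))"

lemma mono_inverse_dim [simp]: "dim_row (mono_inverse m w) = m" "dim_col (mono_inverse m w) = m"
  unfolding mono_inverse_def by simp_all

lemma mono_inverse_carrier: "mono_inverse m w \<in> carrier_mat m m"
  by (simp add: carrier_matI)

lemma mono_inverse_index: "i < m \<Longrightarrow> j < m \<Longrightarrow> mono_inverse m w $$ (i,j) = inverse (w $$ (j,i))"
  unfolding mono_inverse_def by simp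

lemma monomial_mono_inverse:
  assumes w: "monomial_mat m w"
  shows "monomial_mat m (mono_inverse m w)"
    and "\<And>j. j < m \<Longrightarrow> mono_row m (mono_inverse m w) j = mono_col m w j"
    and "\<And>i. i < m \<Longrightarrow> mono_col m (mono_inverse m w) i = mono_row m w i"
  by (rule monomial_mat_transpose_pattern[OF w mono_inverse_carrier];
      simp add: mono_inverse_index)+

lemma mult_mono_inverse:
  assumes w: "monomial_mat m w"
  shows "w * mono_inverse m w = 1\<^sub>m m"
proof (rule eq_matI)
  fix i j assume "i < dim_row (1\<^sub>m m :: 'a mat)" "j < dim_col (1\<^sub>m m :: 'a mat)"
  then have ij: "i < m" "j < m" by auto
  let ?c = "mono_col m w i"
  have c: "?c < m" "w $$ (i, ?c) \<noteq> 0" using mono_col_spec[OF w ij(1)] by auto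
  have "(w * mono_inverse m w) $$ (i,j) = w $$ (i, ?c) * inverse (w $$ (j, ?c))"
    using monomial_mult_index[OF w, of "mono_inverse m w" i j] ij c
    by (simp add: mono_inverse_index)
  also have "\<dots> = 1\<^sub>m m $$ (i,j)"
  proof (cases "i = j")
    case False
    then have "w $$ (j, ?c) = 0"
      using monomial_nonzero_iff_row[OF w ij(2) c(1)] mono_row_col[OF w ij(1)] by auto
    then show ?thesis using False ij by simp
  qed (use ij c in simp)
  finally show "(w * mono_inverse m w) $$ (i,j) = 1\<^sub>m m $$ (i,j)" .
qed (use monomial_mat_carrier[OF w] in simp_all)

lemma mono_inverse_mult:
  assumes w: "monomial_mat m w"
  shows "mono_inverse m w * w = 1\<^sub>m m"
proof (rule eq_matI)
  fix i j assume "i < dim_row (1\<^sub>m m :: 'a mat)" "j < dim_col (1\<^sub>m m :: 'a mat)"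
  then have ij: "i < m" "j < m" by auto
  let ?r = "mono_row m w i"
  have r: "?r < m" "w $$ (?r, i) \<noteq> 0" using mono_row_spec[OF w ij(1)] by auto
  have "(mono_inverse m w * w) $$ (i,j) = inverse (w $$ (?r, i)) * w $$ (?r, j)"
    using monomial_mult_index[OF monomial_mono_inverse(1)[OF w], of w i j] ij r
      monomial_mono_inverse(3)[OF w ij(1)] monomial_mat_carrier[OF w]
    by (simp add: mono_inverse_index)
  also have "\<dots> = 1\<^sub>m m $$ (i,j)"
  proof (cases "i = j")
    case False
    then have "w $$ (?r, j) = 0"
      using monomial_nonzero_iff_col[OF w r(1) ij(2)] mono_col_row[OF w ij(1)] by auto
    then show ?thesis using False ij by simp
  qed (use ij r in simp)
  finally show "(mono_inverse m w * w) $$ (i,j) = 1\<^sub>m m $$ (i,j)" .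
qed (use monomial_mat_carrier[OF w] in simp_all)

lemma mono_inverse_unique:
  assumes w: "monomial_mat m w" and y: "y \<in> carrier_mat m m" and wy: "w * y = 1\<^sub>m m"
  shows "y = mono_inverse m w"
proof -
  have "y = (mono_inverse m w * w) * y" using mono_inverse_mult[OF w] y by simp
  also have "\<dots> = mono_inverse m w * (w * y)"
    using monomial_mat_carrier[OF w] y mono_inverse_carrier by (metis assoc_mult_mat)
  also have "\<dots> = mono_inverse m w" using wy mono_inverse_carrier by simp
  finally show ?thesis .
qed

definition perm_mat :: "nat \<Rightarrow> (nat \<Rightarrow> nat) \<Rightarrow> 'k::field mat" where
  "perm_mat m \<rho> = mat m m (\<lambda>(i,j). if i = \<rho> j then 1 else 0)"

lemma monomial_perm_mat:
  assumes "bij_betw \<rho> {..<m} {..<m}"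
  shows "monomial_mat m (perm_mat m \<rho> :: 'k::field mat)"
    and "\<And>j. j < m \<Longrightarrow> mono_row m (perm_mat m \<rho> :: 'k mat) j = \<rho> j"
  by (rule monomial_mat_pattern[OF _ assms]; simp add: perm_mat_def)+

lemma perm_mat_index: "i < m \<Longrightarrow> j < m \<Longrightarrow> perm_mat m \<rho> $$ (i,j) = (if i = \<rho> j then 1 else 0)"
  unfolding perm_mat_def by simp

section \<open>Levi subgroups attached to index sets\<close>

definition block_levi :: "'k::field mat set \<Rightarrow> nat \<Rightarrow> nat set \<Rightarrow> 'k mat set" where
  "block_levi G m S = {A \<in> G. \<forall>i<m. \<forall>j<m. i \<noteq> j \<and> (i \<notin> S \<or> j \<notin> S) \<longrightarrow> A $$ (i,j) = 0}"

definition central_block :: "nat \<Rightarrow> nat \<Rightarrow> nat \<Rightarrow> nat set" where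
  "central_block m n r = {i. n - r \<le> i \<and> i < m - (n - r)}"

lemma block_levi_Int: "block_levi G m S \<inter> block_levi G m T = block_levi G m (S \<inter> T)"
  unfolding block_levi_def by blast

lemma conj_mono_inverse_index:
  assumes w: "monomial_mat m w" and h: "h \<in> carrier_mat m m" and ij: "i < m" "j < m"
  shows "(w * h * mono_inverse m w) $$ (i,j)
    = w $$ (i, mono_col m w i) * h $$ (mono_col m w i, mono_col m w j) * mono_inverse m w $$ (mono_col m w j, j)"
proof -
  have "(w * h * mono_inverse m w) $$ (i,j)
      = (w * h) $$ (i, mono_col m w j) * mono_inverse m w $$ (mono_col m w j, j)"
    using mult_monomial_index[OF monomial_mono_inverse(1)[OF w], of "w * h" i j] h ij
      monomial_mono_inverse(2)[OF w ij(2)] monomial_mat_carrier[OF w] by simp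
  also have "(w * h) $$ (i, mono_col m w j) = w $$ (i, mono_col m w i) * h $$ (mono_col m w i, mono_col m w j)"
    using monomial_mult_index[OF w, of h i "mono_col m w j"] h ij mono_col_spec(1)[OF w ij(2)] by simp
  finally show ?thesis .
qed

lemma mono_inverse_conj_index:
  assumes w: "monomial_mat m w" and h: "h \<in> carrier_mat m m" and ij: "i < m" "j < m"
  shows "(mono_inverse m w * h * w) $$ (i,j)
    = mono_inverse m w $$ (i, mono_row m w i) * h $$ (mono_row m w i, mono_row m w j) * w $$ (mono_row m w j, j)"
proof -
  have "(mono_inverse m w * h * w) $$ (i,j) = (mono_inverse m w * h) $$ (i, mono_row m w j) * w $$ (mono_row m w j, j)"
    using mult_monomial_index[OF w, of "mono_inverse m w * h" i j] h ij by simp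
  also have "(mono_inverse m w * h) $$ (i, mono_row m w j)
      = mono_inverse m w $$ (i, mono_row m w i) * h $$ (mono_row m w i, mono_row m w j)"
    using monomial_mult_index[OF monomial_mono_inverse(1)[OF w], of h i "mono_row m w j"] h ij
      monomial_mono_inverse(3)[OF w ij(1)] mono_row_spec(1)[OF w ij(2)] by simp
  finally show ?thesis .
qed

lemma conj_set_monomial:
  assumes "monomial_mat m w"
  shows "conj_set m w H = {w * h * mono_inverse m w | h. h \<in> H}"
  unfolding conj_set_def
  using mono_inverse_unique[OF assms] mult_mono_inverse[OF assms] mono_inverse_carrier by blast

lemma conj_set_block_levi:
  assumes G: "G \<subseteq> carrier_mat m m" and w: "monomial_mat m w"
    and closed: "\<And>A. A \<in> G \<Longrightarrow> w * A * mono_inverse m w \<in> G"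
      "\<And>A. A \<in> G \<Longrightarrow> mono_inverse m w * A * w \<in> G"
  shows "conj_set m w (block_levi G m S) = block_levi G m {i. i < m \<and> mono_col m w i \<in> S}"
  unfolding conj_set_monomial[OF w]
proof (intro equalityI subsetI)
  fix B assume "B \<in> {w * h * mono_inverse m w |h. h \<in> block_levi G m S}"
  then obtain h where B: "B = w * h * mono_inverse m w" and h: "h \<in> block_levi G m S" by blast
  have hG: "h \<in> G" and hc: "h \<in> carrier_mat m m" using h G unfolding block_levi_def by auto
  show "B \<in> block_levi G m {i. i < m \<and> mono_col m w i \<in> S}"
    unfolding block_levi_def
  proof (intro CollectI conjI allI impI)
    show "B \<in> G" using closed(1)[OF hG] B by simp
    fix i j assume ij: "i < m" "j < m"
      and off: "i \<noteq> j \<and> (i \<notin> {i. i < m \<and> mono_col m w i \<in> S} \<or> j \<notin> {i. i < m \<and> mono_col m w i \<in> S})"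
    have "mono_col m w i \<noteq> mono_col m w j" using off ij mono_row_col[OF w] by metis
    then have "h $$ (mono_col m w i, mono_col m w j) = 0"
      using h off ij mono_col_spec(1)[OF w] unfolding block_levi_def by auto
    then show "B $$ (i,j) = 0" unfolding B conj_mono_inverse_index[OF w hc ij] by simp
  qed
next
  fix B assume B: "B \<in> block_levi G m {i. i < m \<and> mono_col m w i \<in> S}"
  have BG: "B \<in> G" and Bc: "B \<in> carrier_mat m m" using B G unfolding block_levi_def by auto
  define h where "h = mono_inverse m w * B * w"
  have "w * h * mono_inverse m w = (w * mono_inverse m w) * B * (w * mono_inverse m w)"
    unfolding h_def using mono_inverse_carrier[of m w] Bc monomial_mat_carrier[OF w]
    by (simp add: assoc_mult_mat[of _ m m _ m _ m])
  then have B_eq: "B = w * h * mono_inverse m w" using mult_mono_inverse[OF w] Bc by simp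
  have "h \<in> block_levi G m S" unfolding block_levi_def
  proof (intro CollectI conjI allI impI)
    show "h \<in> G" unfolding h_def using closed(2)[OF BG] .
    fix a b assume ab: "a < m" "b < m" and off: "a \<noteq> b \<and> (a \<notin> S \<or> b \<notin> S)"
    have "mono_row m w a \<noteq> mono_row m w b" using off ab mono_col_row[OF w] by metis
    then have "B $$ (mono_row m w a, mono_row m w b) = 0"
      using B off ab mono_row_spec(1)[OF w] mono_col_row[OF w] unfolding block_levi_def by auto
    then show "h $$ (a,b) = 0" unfolding h_def mono_inverse_conj_index[OF w Bc ab] by simp
  qed
  then show "B \<in> {w * h * mono_inverse m w |h. h \<in> block_levi G m S}" using B_eq by blast
qed

section \<open>Permutations and index sets compatible with the pairing\<close>

text \<open>The pairing is i \<leftrightarrow> m - 1 - i.  Paired permutations permute the pairs without swapping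
  the two members of a pair: the symmetric group on n letters inside the Weyl group of type B_n.\<close>

definition paired_perm :: "nat \<Rightarrow> nat \<Rightarrow> (nat \<Rightarrow> nat) \<Rightarrow> bool" where
  "paired_perm m n \<rho> \<longleftrightarrow> bij_betw \<rho> {..<m} {..<m}
     \<and> (\<forall>i<m. \<rho> (m - 1 - i) = m - 1 - \<rho> i) \<and> (\<forall>i<m. \<rho> i < n \<longleftrightarrow> i < n)"

definition paired_set :: "nat \<Rightarrow> nat \<Rightarrow> nat set \<Rightarrow> bool" where
  "paired_set m n T \<longleftrightarrow> T \<subseteq> {..<m} \<and> (\<forall>i<m. m - 1 - i \<in> T \<longleftrightarrow> i \<in> T) \<and> (m = 2*n+1 \<longrightarrow> n \<in> T)"

lemma paired_permD:
  assumes "paired_perm m n \<rho>"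
  shows "bij_betw \<rho> {..<m} {..<m}" and "\<And>i. i < m \<Longrightarrow> \<rho> i < m"
    and "\<And>i. i < m \<Longrightarrow> \<rho> (m - 1 - i) = m - 1 - \<rho> i" and "\<And>i. i < m \<Longrightarrow> \<rho> i < n \<longleftrightarrow> i < n"
  using assms unfolding paired_perm_def bij_betw_def by auto

lemma paired_perm_sum_eq_iff:
  assumes \<rho>: "paired_perm m n \<rho>" and ab: "a < m" "b < m"
  shows "\<rho> a + \<rho> b = m - 1 \<longleftrightarrow> a + b = m - 1"
proof -
  have inj: "inj_on \<rho> {..<m}" using paired_permD(1)[OF \<rho>] unfolding bij_betw_def ..
  have "\<rho> b = \<rho> (m - 1 - a) \<longleftrightarrow> b = m - 1 - a"
    using inj_on_eq_iff[OF inj, of b "m - 1 - a"] ab by simp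
  then show ?thesis using paired_permD(2,3)[OF \<rho> ab(1)] ab by auto
qed

lemma paired_perm_bij_lower:
  assumes \<rho>: "paired_perm m n \<rho>" and n: "n \<le> m"
  shows "bij_betw \<rho> {..<n} {..<n}"
proof -
  have bij: "bij_betw \<rho> {..<m} {..<m}" and lower: "\<And>i. i < m \<Longrightarrow> \<rho> i < n \<longleftrightarrow> i < n"
    using paired_permD[OF \<rho>] by auto
  have "inj_on \<rho> {..<n}"
    using bij n unfolding bij_betw_def by (auto intro: inj_on_subset)
  moreover have "\<rho> ` {..<n} = {..<n}"
  proof
    show "\<rho> ` {..<n} \<subseteq> {..<n}" using lower n by auto
    show "{..<n} \<subseteq> \<rho> ` {..<n}"
    proof
      fix i assume i: "i \<in> {..<n}"
      then have "i \<in> \<rho> ` {..<m}" using bij n unfolding bij_betw_def by auto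
      then obtain j where "j < m" "i = \<rho> j" by auto
      then show "i \<in> \<rho> ` {..<n}" using lower i by auto
    qed
  qed
  ultimately show ?thesis unfolding bij_betw_def ..
qed

lemma paired_set_Int: "paired_set m n S \<Longrightarrow> paired_set m n T \<Longrightarrow> paired_set m n (S \<inter> T)"
  unfolding paired_set_def by blast

lemma paired_set_central_block:
  "m = 2*n \<or> m = 2*n+1 \<Longrightarrow> paired_set m n (central_block m n r)"
  unfolding paired_set_def central_block_def by auto

lemma mono_col_pairing:
  assumes w: "monomial_mat m w"
    and pairing: "\<And>i. i < m \<Longrightarrow> mono_row m w (m - 1 - i) = m - 1 - mono_row m w i"
    and i: "i < m"
  shows "mono_col m w (m - 1 - i) = m - 1 - mono_col m w i"
proof -
  let ?j = "mono_col m w i"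
  have j: "?j < m" using mono_col_spec[OF w i] by simp
  have "mono_row m w (m - 1 - ?j) = m - 1 - i" using pairing[OF j] mono_row_col[OF w i] by simp
  then have "mono_col m w (m - 1 - i) = mono_col m w (mono_row m w (m - 1 - ?j))" by simp
  also have "\<dots> = m - 1 - ?j" using mono_col_row[OF w] j by simp
  finally show ?thesis .
qed

lemma paired_set_mono_col_preimage:
  assumes m: "m = 2*n \<or> m = 2*n+1" and w: "monomial_mat m w"
    and pairing: "\<And>i. i < m \<Longrightarrow> mono_row m w (m - 1 - i) = m - 1 - mono_row m w i"
    and S: "paired_set m n S"
  shows "paired_set m n {i. i < m \<and> mono_col m w i \<in> S}"
proof -
  have col_sym: "mono_col m w (m - 1 - i) = m - 1 - mono_col m w i" if "i < m" for i
    by (rule mono_col_pairing[OF w pairing that])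
  have "m - 1 - i \<in> {i. i < m \<and> mono_col m w i \<in> S} \<longleftrightarrow> i \<in> {i. i < m \<and> mono_col m w i \<in> S}"
    if i: "i < m" for i
    using col_sym[OF i] mono_col_spec(1)[OF w i] S i unfolding paired_set_def by auto
  moreover have "mono_col m w n = n" if "m = 2*n+1"
    using col_sym[of n] that by simp
  ultimately show ?thesis using S unfolding paired_set_def by auto
qed

lemma bij_lessThan_sorting_subset:
  assumes P: "P \<subseteq> {..<n}"
  shows "\<exists>\<pi>. bij_betw \<pi> {..<n} {..<n} \<and> (\<forall>j<n. \<pi> j \<in> P \<longleftrightarrow> n - card P \<le> j)"
proof -
  let ?k = "card P"
  have fin: "finite P" using P finite_subset by blast
  have k: "?k \<le> n" using card_mono[OF _ P] by simp
  obtain f where f: "bij_betw f {n - ?k..<n} P"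
    using finite_same_card_bij[OF _ fin, of "{n - ?k..<n}"] k by auto
  obtain g where g: "bij_betw g {..<n - ?k} ({..<n} - P)"
    using finite_same_card_bij[of "{..<n - ?k}" "{..<n} - P"] k P fin by (auto simp: card_Diff_subset)
  define \<pi> where "\<pi> j = (if n - ?k \<le> j then f j else g j)" for j
  have "bij_betw \<pi> {n - ?k..<n} P" using f by (rule bij_betw_cong[THEN iffD1, rotated]) (simp add: \<pi>_def)
  moreover have "bij_betw \<pi> {..<n - ?k} ({..<n} - P)"
    using g by (rule bij_betw_cong[THEN iffD1, rotated]) (simp add: \<pi>_def)
  ultimately have "bij_betw \<pi> ({n - ?k..<n} \<union> {..<n - ?k}) (P \<union> ({..<n} - P))"
    by (rule bij_betw_combine) blast
  moreover have "{n - ?k..<n} \<union> {..<n - ?k} = {..<n}" "P \<union> ({..<n} - P) = {..<n}" using P by auto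
  ultimately have bij: "bij_betw \<pi> {..<n} {..<n}" by simp
  have "\<pi> j \<in> P \<longleftrightarrow> n - ?k \<le> j" if "j < n" for j
    using f g that unfolding \<pi>_def bij_betw_def by auto
  then show ?thesis using bij by blast
qed

definition mirror_extend :: "nat \<Rightarrow> nat \<Rightarrow> (nat \<Rightarrow> nat) \<Rightarrow> nat \<Rightarrow> nat" where
  "mirror_extend m n \<pi> i = (if i < n then \<pi> i else if i < m - n then i else m - 1 - \<pi> (m - 1 - i))"

lemma paired_perm_mirror_extend:
  assumes m: "m = 2*n \<or> m = 2*n+1" and \<pi>: "bij_betw \<pi> {..<n} {..<n}"
  shows "paired_perm m n (mirror_extend m n \<pi>)"
proof -
  let ?\<rho> = "mirror_extend m n \<pi>"
  have \<pi>_less: "\<pi> j < n" if "j < n" for j using \<pi> that unfolding bij_betw_def by auto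
  have mirror: "bij_betw (\<lambda>i. m - 1 - i) {m - n..<m} {..<n}" "bij_betw (\<lambda>i. m - 1 - i) {..<n} {m - n..<m}"
    using m by (auto intro!: bij_betw_byWitness[where f' = "\<lambda>i. m - 1 - i"])
  have "bij_betw ((\<lambda>i. m - 1 - i) \<circ> (\<pi> \<circ> (\<lambda>i. m - 1 - i))) {m - n..<m} {m - n..<m}"
    by (rule bij_betw_trans[OF bij_betw_trans[OF mirror(1) \<pi>] mirror(2)])
  then have upper: "bij_betw ?\<rho> {m - n..<m} {m - n..<m}"
    by (rule bij_betw_cong[THEN iffD1, rotated]) (use m in \<open>auto simp: mirror_extend_def\<close>)
  have lower: "bij_betw ?\<rho> {..<n} {..<n}"
    using \<pi> by (rule bij_betw_cong[THEN iffD1, rotated]) (simp add: mirror_extend_def)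
  have middle: "bij_betw ?\<rho> {n..<m - n} {n..<m - n}"
    by (rule bij_betw_cong[THEN iffD1, rotated, OF bij_betw_id]) (auto simp: mirror_extend_def)
  have "bij_betw ?\<rho> ({..<n} \<union> {n..<m - n} \<union> {m - n..<m}) ({..<n} \<union> {n..<m - n} \<union> {m - n..<m})"
    by (intro bij_betw_combine lower middle upper) (use m in auto)
  moreover have "{..<n} \<union> {n..<m - n} \<union> {m - n..<m} = {..<m}" using m by auto
  ultimately have bij: "bij_betw ?\<rho> {..<m} {..<m}" by simp
  have "?\<rho> (m - 1 - i) = m - 1 - ?\<rho> i \<and> (?\<rho> i < n \<longleftrightarrow> i < n)" if i: "i < m" for i
  proof -
    consider "i < n" | "n \<le> i" "i < m - n" | "m - n \<le> i" by linarith
    then show ?thesis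
    proof cases
      case 1
      then show ?thesis using \<pi>_less[OF 1] m by (auto simp: mirror_extend_def)
    next
      case 2
      then show ?thesis using m i by (auto simp: mirror_extend_def)
    next
      case 3
      then have "m - 1 - i < n" using m i by auto
      then show ?thesis using \<pi>_less[OF \<open>m - 1 - i < n\<close>] 3 m i by (auto simp: mirror_extend_def)
    qed
  qed
  then show ?thesis using bij unfolding paired_perm_def by blast
qed

lemma paired_set_perm_central_block:
  assumes m: "m = 2*n \<or> m = 2*n+1" and T: "paired_set m n T"
  shows "\<exists>k\<le>n. \<exists>\<rho>. paired_perm m n \<rho> \<and> (\<forall>j<m. \<rho> j \<in> T \<longleftrightarrow> j \<in> central_block m n k)"
proof -
  define k where "k = card (T \<inter> {..<n})"
  have k: "k \<le> n" unfolding k_def using card_mono[of "{..<n}" "T \<inter> {..<n}"] by auto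
  obtain \<pi> where \<pi>: "bij_betw \<pi> {..<n} {..<n}" and \<pi>_T: "\<And>j. j < n \<Longrightarrow> \<pi> j \<in> T \<inter> {..<n} \<longleftrightarrow> n - k \<le> j"
    using bij_lessThan_sorting_subset[of "T \<inter> {..<n}" n] unfolding k_def by auto
  have \<pi>_less: "\<pi> j < n" if "j < n" for j using \<pi> that unfolding bij_betw_def by auto
  have T_mirror: "m - 1 - i \<in> T \<longleftrightarrow> i \<in> T" if "i < m" for i
    using T that unfolding paired_set_def by blast
  have "mirror_extend m n \<pi> j \<in> T \<longleftrightarrow> j \<in> central_block m n k" if j: "j < m" for j
  proof -
    consider "j < n" | "n \<le> j" "j < m - n" | "m - n \<le> j" by linarith
    then show ?thesis
    proof cases
      case 1
      then show ?thesis using \<pi>_T[OF 1] \<pi>_less[OF 1] m k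
        by (auto simp: mirror_extend_def central_block_def)
    next
      case 2
      then have "m = 2*n+1" "j = n" using m j by auto
      then show ?thesis using T 2 by (auto simp: mirror_extend_def central_block_def paired_set_def)
    next
      case 3
      have "m - 1 - j < n" using 3 m j by auto
      then have "mirror_extend m n \<pi> j \<in> T \<longleftrightarrow> \<pi> (m - 1 - j) \<in> T"
        using 3 m T_mirror[of "\<pi> (m - 1 - j)"] \<pi>_less[of "m - 1 - j"]
        by (auto simp: mirror_extend_def)
      also have "\<dots> \<longleftrightarrow> j \<in> central_block m n k"
        using \<pi>_T[OF \<open>m - 1 - j < n\<close>] \<pi>_less[OF \<open>m - 1 - j < n\<close>] 3 m j k
        by (auto simp: central_block_def)
      finally show ?thesis .
    qed
  qed
  then show ?thesis using k paired_perm_mirror_extend[OF m \<pi>] by blast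
qed

section \<open>Pure Levi subgroups of a group with paired monomial elements\<close>

locale paired_monomial_group =
  fixes m n :: nat and G :: "'k::field mat set"
  assumes dim: "m = 2*n \<or> m = 2*n+1"
    and carrier: "G \<subseteq> carrier_mat m m"
    and conj_closed: "\<And>w A. monomial_mat m w \<Longrightarrow> w \<in> G \<Longrightarrow> A \<in> G \<Longrightarrow> w * A * mono_inverse m w \<in> G"
    and conj_closed': "\<And>w A. monomial_mat m w \<Longrightarrow> w \<in> G \<Longrightarrow> A \<in> G \<Longrightarrow> mono_inverse m w * A * w \<in> G"
    and pairing: "\<And>w i. monomial_mat m w \<Longrightarrow> w \<in> G \<Longrightarrow> i < m
      \<Longrightarrow> mono_row m w (m - 1 - i) = m - 1 - mono_row m w i"
    and realises: "\<And>\<rho>. paired_perm m n \<rho> \<Longrightarrow> \<exists>w\<in>G. monomial_mat m w \<and> (\<forall>j<m. mono_row m w j = \<rho> j)"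
begin

definition pure_block_levi :: "'k mat set \<Rightarrow> bool" where
  "pure_block_levi L \<longleftrightarrow>
     (\<exists>w\<in>G. monomial_mat m w \<and> (\<exists>k\<le>n. L = conj_set m w (block_levi G m (central_block m n k))))"

lemma conj_set_block_levi_monomial:
  assumes "monomial_mat m w" "w \<in> G"
  shows "conj_set m w (block_levi G m S) = block_levi G m {i. i < m \<and> mono_col m w i \<in> S}"
  using conj_set_block_levi[OF carrier assms(1)] conj_closed[OF assms] conj_closed'[OF assms] by blast

lemma pure_block_levi_paired_set:
  assumes T: "paired_set m n T"
  shows "pure_block_levi (block_levi G m T)"
proof -
  obtain k \<rho> where k: "k \<le> n" and \<rho>: "paired_perm m n \<rho>"
    and \<rho>_T: "\<And>j. j < m \<Longrightarrow> \<rho> j \<in> T \<longleftrightarrow> j \<in> central_block m n k"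
    using paired_set_perm_central_block[OF dim T] by blast
  obtain w where wG: "w \<in> G" and w: "monomial_mat m w" and w_\<rho>: "\<And>j. j < m \<Longrightarrow> mono_row m w j = \<rho> j"
    using realises[OF \<rho>] by blast
  have "i \<in> T \<longleftrightarrow> mono_col m w i \<in> central_block m n k" if i: "i < m" for i
    using \<rho>_T[OF mono_col_spec(1)[OF w i]] w_\<rho>[OF mono_col_spec(1)[OF w i]] mono_row_col[OF w i] by simp
  then have "{i. i < m \<and> mono_col m w i \<in> central_block m n k} = T"
    using T unfolding paired_set_def by blast
  then have "block_levi G m T = conj_set m w (block_levi G m (central_block m n k))"
    using conj_set_block_levi_monomial[OF w wG] by simp
  then show ?thesis unfolding pure_block_levi_def using w wG k by blast
qed

lemma pure_block_levi_conj_Int: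
  assumes L: "pure_block_levi L" and M: "pure_block_levi M" and x: "monomial_mat m x" "x \<in> G"
  shows "pure_block_levi (conj_set m x L \<inter> M)"
proof -
  have preimage: "paired_set m n {i. i < m \<and> mono_col m w i \<in> S}"
    if "monomial_mat m w" "w \<in> G" "paired_set m n S" for w S
    using paired_set_mono_col_preimage[OF dim that(1) pairing[OF that(1,2)] that(3)] .
  obtain y r where y: "monomial_mat m y" "y \<in> G"
    and L_eq: "L = block_levi G m {i. i < m \<and> mono_col m y i \<in> central_block m n r}"
    using L conj_set_block_levi_monomial unfolding pure_block_levi_def by blast
  obtain z s where z: "monomial_mat m z" "z \<in> G"
    and M_eq: "M = block_levi G m {i. i < m \<and> mono_col m z i \<in> central_block m n s}"
    using M conj_set_block_levi_monomial unfolding pure_block_levi_def by blast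
  let ?T = "{i. i < m \<and> mono_col m x i \<in> {i. i < m \<and> mono_col m y i \<in> central_block m n r}}
    \<inter> {i. i < m \<and> mono_col m z i \<in> central_block m n s}"
  have "conj_set m x L \<inter> M = block_levi G m ?T"
    unfolding L_eq M_eq conj_set_block_levi_monomial[OF x] block_levi_Int ..
  moreover have "paired_set m n ?T"
    by (intro paired_set_Int preimage x y z paired_set_central_block dim)
  ultimately show ?thesis using pure_block_levi_paired_set by simp
qed

end

section \<open>Isometry groups of twisted forms\<close>

definition twisted_transpose :: "('k::field \<Rightarrow> 'k) \<Rightarrow> 'k mat \<Rightarrow> 'k mat" where
  "twisted_transpose f A = mat (dim_col A) (dim_row A) (\<lambda>(i,j). f (A $$ (j,i)))"

lemma twisted_transpose_index [simp]:
  "i < dim_col A \<Longrightarrow> j < dim_row A \<Longrightarrow> twisted_transpose f A $$ (i,j) = f (A $$ (j,i))"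
  unfolding twisted_transpose_def by simp

lemma twisted_transpose_dim [simp]:
  "dim_row (twisted_transpose f A) = dim_col A" "dim_col (twisted_transpose f A) = dim_row A"
  unfolding twisted_transpose_def by simp_all

lemma twisted_transpose_carrier:
  assumes "A \<in> carrier_mat m m"
  shows "twisted_transpose f A \<in> carrier_mat m m"
  using carrier_matD[OF assms] by (intro carrier_matI) simp_all

lemma conj_transp_eq_twisted_transpose: "conj_transp q A = twisted_transpose (\<lambda>a. a ^ q) A"
  unfolding conj_transp_def by (rule eq_matI) auto

lemma transpose_eq_twisted_transpose_id: "transpose_mat A = twisted_transpose id A"
  by (rule eq_matI) auto

locale field_twist =
  fixes f :: "'k::field \<Rightarrow> 'k"
  assumes f_zero: "f 0 = 0" and f_one: "f 1 = 1" and f_mult: "\<And>x y. f (x * y) = f x * f y"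
begin

lemma f_nonzero_iff: "f x \<noteq> 0 \<longleftrightarrow> x \<noteq> 0"
proof
  assume "x \<noteq> 0"
  then have "f x * f (inverse x) = 1" by (simp flip: f_mult add: f_one)
  then show "f x \<noteq> 0" by auto
qed (use f_zero in auto)

lemma monomial_twisted_transpose:
  assumes M: "monomial_mat m M"
  shows "monomial_mat m (twisted_transpose f M)"
    and "\<And>j. j < m \<Longrightarrow> mono_row m (twisted_transpose f M) j = mono_col m M j"
    and "\<And>i. i < m \<Longrightarrow> mono_col m (twisted_transpose f M) i = mono_row m M i"
  by (rule monomial_mat_transpose_pattern[OF M twisted_transpose_carrier[OF monomial_mat_carrier[OF M]]];
      use monomial_mat_carrier[OF M] in \<open>simp add: f_nonzero_iff\<close>)+

lemma twisted_transpose_monomial_mult: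
  assumes M: "monomial_mat m M" and N: "N \<in> carrier_mat m m"
  shows "twisted_transpose f (M * N) = twisted_transpose f N * twisted_transpose f M"
proof (rule eq_matI)
  fix a b assume "a < dim_row (twisted_transpose f N * twisted_transpose f M)"
    "b < dim_col (twisted_transpose f N * twisted_transpose f M)"
  then have ab: "a < m" "b < m" using monomial_mat_carrier[OF M] N by auto
  let ?c = "mono_col m M b"
  have "twisted_transpose f (M * N) $$ (a,b) = f (M $$ (b, ?c) * N $$ (?c, a))"
    using monomial_mult_index[OF M, of N b a] ab N monomial_mat_carrier[OF M] by simp
  also have "\<dots> = f (N $$ (?c, a)) * f (M $$ (b, ?c))" by (simp add: f_mult)
  also have "\<dots> = (twisted_transpose f N * twisted_transpose f M) $$ (a,b)"
    using mult_monomial_index[OF monomial_twisted_transpose(1)[OF M], of "twisted_transpose f N" a b]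
      ab N monomial_mat_carrier[OF M] mono_col_spec(1)[OF M ab(2)] monomial_twisted_transpose(2)[OF M ab(2)]
    by simp
  finally show "twisted_transpose f (M * N) $$ (a,b) = (twisted_transpose f N * twisted_transpose f M) $$ (a,b)" .
qed (use monomial_mat_carrier[OF M] N in auto)

lemma twisted_transpose_mult_monomial:
  assumes N: "monomial_mat m N" and M: "M \<in> carrier_mat m m"
  shows "twisted_transpose f (M * N) = twisted_transpose f N * twisted_transpose f M"
proof (rule eq_matI)
  fix a b assume "a < dim_row (twisted_transpose f N * twisted_transpose f M)"
    "b < dim_col (twisted_transpose f N * twisted_transpose f M)"
  then have ab: "a < m" "b < m" using monomial_mat_carrier[OF N] M by auto
  let ?r = "mono_row m N a"
  have "twisted_transpose f (M * N) $$ (a,b) = f (M $$ (b, ?r) * N $$ (?r, a))"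
    using mult_monomial_index[OF N, of M b a] ab M monomial_mat_carrier[OF N] by simp
  also have "\<dots> = f (N $$ (?r, a)) * f (M $$ (b, ?r))" by (simp add: f_mult mult.commute)
  also have "\<dots> = (twisted_transpose f N * twisted_transpose f M) $$ (a,b)"
    using monomial_mult_index[OF monomial_twisted_transpose(1)[OF N], of "twisted_transpose f M" a b]
      ab M monomial_mat_carrier[OF N] mono_row_spec(1)[OF N ab(1)] monomial_twisted_transpose(3)[OF N ab(1)]
    by simp
  finally show "twisted_transpose f (M * N) $$ (a,b) = (twisted_transpose f N * twisted_transpose f M) $$ (a,b)" .
qed (use monomial_mat_carrier[OF N] M in auto)

lemma twisted_transpose_one: "twisted_transpose f (1\<^sub>m m) = 1\<^sub>m m"
  by (rule eq_matI) (auto simp: f_zero f_one)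

lemma twisted_transpose_monomial_index:
  assumes J: "J \<in> carrier_mat m m" and w: "monomial_mat m w" and ab: "a < m" "b < m"
  shows "(twisted_transpose f w * J * w) $$ (a,b)
    = f (w $$ (mono_row m w a, a)) * J $$ (mono_row m w a, mono_row m w b) * w $$ (mono_row m w b, b)"
proof -
  have "(twisted_transpose f w * J * w) $$ (a,b)
      = (twisted_transpose f w * J) $$ (a, mono_row m w b) * w $$ (mono_row m w b, b)"
    using mult_monomial_index[OF w, of "twisted_transpose f w * J" a b] J ab monomial_mat_carrier[OF w]
    by simp
  also have "(twisted_transpose f w * J) $$ (a, mono_row m w b)
      = f (w $$ (mono_row m w a, a)) * J $$ (mono_row m w a, mono_row m w b)"
    using monomial_mult_index[OF monomial_twisted_transpose(1)[OF w], of J a "mono_row m w b"]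
      monomial_twisted_transpose(3)[OF w ab(1)] J ab monomial_mat_carrier[OF w]
      mono_row_spec(1)[OF w] by simp
  finally show ?thesis .
qed

definition isometry_group :: "'k mat \<Rightarrow> nat \<Rightarrow> 'k mat set" where
  "isometry_group J m = {A \<in> carrier_mat m m. twisted_transpose f A * J * A = J}"

lemma isometry_group_monomial_mult:
  assumes J: "J \<in> carrier_mat m m" and w: "monomial_mat m w" "w \<in> isometry_group J m"
    and A: "A \<in> isometry_group J m"
  shows "w * A \<in> isometry_group J m" and "A * w \<in> isometry_group J m"
proof -
  have wc: "w \<in> carrier_mat m m" using monomial_mat_carrier[OF w(1)] .
  have Ac: "A \<in> carrier_mat m m" and A_iso: "twisted_transpose f A * J * A = J"
    and w_iso: "twisted_transpose f w * J * w = J"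
    using w A unfolding isometry_group_def by auto
  note carriers = J wc Ac twisted_transpose_carrier[OF wc, of f] twisted_transpose_carrier[OF Ac, of f]
  have "twisted_transpose f (w * A) * J * (w * A) = twisted_transpose f A * (twisted_transpose f w * J * w) * A"
    unfolding twisted_transpose_monomial_mult[OF w(1) Ac] using carriers
    by (simp add: assoc_mult_mat[of _ m m _ m _ m])
  then show "w * A \<in> isometry_group J m"
    using w_iso A_iso wc Ac unfolding isometry_group_def by simp
  have "twisted_transpose f (A * w) * J * (A * w) = twisted_transpose f w * (twisted_transpose f A * J * A) * w"
    unfolding twisted_transpose_mult_monomial[OF w(1) Ac] using carriers
    by (simp add: assoc_mult_mat[of _ m m _ m _ m])
  then show "A * w \<in> isometry_group J m"
    using w_iso A_iso wc Ac unfolding isometry_group_def by simp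
qed

lemma isometry_group_mono_inverse:
  assumes J: "J \<in> carrier_mat m m" and w: "monomial_mat m w" "w \<in> isometry_group J m"
  shows "mono_inverse m w \<in> isometry_group J m"
proof -
  let ?y = "mono_inverse m w"
  have wc: "w \<in> carrier_mat m m" and w_iso: "twisted_transpose f w * J * w = J"
    using w unfolding isometry_group_def by auto
  have "twisted_transpose f ?y * J * ?y = twisted_transpose f ?y * (twisted_transpose f w * J * w) * ?y"
    using w_iso by simp
  also have "\<dots> = twisted_transpose f (w * ?y) * J * (w * ?y)"
    unfolding twisted_transpose_monomial_mult[OF w(1) mono_inverse_carrier]
    using J wc mono_inverse_carrier[of m w] twisted_transpose_carrier[OF wc, of f]
      twisted_transpose_carrier[OF mono_inverse_carrier[of m w], of f]
    by (simp add: assoc_mult_mat[of _ m m _ m _ m])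
  also have "\<dots> = J" unfolding mult_mono_inverse[OF w(1)] twisted_transpose_one using J by simp
  finally show ?thesis unfolding isometry_group_def using mono_inverse_carrier by auto
qed

lemma isometry_group_pairing:
  assumes J: "J \<in> carrier_mat m m" and w: "monomial_mat m w" "w \<in> isometry_group J m"
    and J_antidiag: "\<And>i j. i < m \<Longrightarrow> j < m \<Longrightarrow> J $$ (i,j) \<noteq> 0 \<longleftrightarrow> i + j = m - 1"
    and a: "a < m"
  shows "mono_row m w (m - 1 - a) = m - 1 - mono_row m w a"
proof -
  let ?b = "m - 1 - a"
  have b: "?b < m" using a by auto
  have "(twisted_transpose f w * J * w) $$ (a, ?b) = J $$ (a, ?b)"
    using w unfolding isometry_group_def by auto
  also have "\<dots> \<noteq> 0" using J_antidiag[OF a b] a by auto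
  finally have "J $$ (mono_row m w a, mono_row m w ?b) \<noteq> 0"
    unfolding twisted_transpose_monomial_index[OF J w(1) a b] by auto
  then have "mono_row m w a + mono_row m w ?b = m - 1"
    using J_antidiag mono_row_spec(1)[OF w(1)] a b by auto
  then show ?thesis by auto
qed

lemma perm_mat_isometry_group:
  assumes J: "J \<in> carrier_mat m m" and \<rho>: "bij_betw \<rho> {..<m} {..<m}"
    and J_inv: "\<And>a b. a < m \<Longrightarrow> b < m \<Longrightarrow> J $$ (\<rho> a, \<rho> b) = J $$ (a,b)"
  shows "perm_mat m \<rho> \<in> isometry_group J m"
proof -
  have P: "monomial_mat m (perm_mat m \<rho>)" by (rule monomial_perm_mat(1)[OF \<rho>])
  have \<rho>_less: "\<rho> j < m" if "j < m" for j using \<rho> that unfolding bij_betw_def by auto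
  have "twisted_transpose f (perm_mat m \<rho>) * J * perm_mat m \<rho> = J"
  proof (rule eq_matI)
    fix a b assume "a < dim_row J" "b < dim_col J"
    then have ab: "a < m" "b < m" using J by auto
    show "(twisted_transpose f (perm_mat m \<rho>) * J * perm_mat m \<rho>) $$ (a,b) = J $$ (a,b)"
      unfolding twisted_transpose_monomial_index[OF J P ab] monomial_perm_mat(2)[OF \<rho> ab(1)]
        monomial_perm_mat(2)[OF \<rho> ab(2)]
      using ab \<rho>_less J_inv[OF ab] by (simp add: perm_mat_index f_one)
  qed (use J monomial_mat_carrier[OF P] in auto)
  then show ?thesis unfolding isometry_group_def using monomial_mat_carrier[OF P] by auto
qed

lemma paired_monomial_group_isometry_group:
  assumes m: "m = 2*n \<or> m = 2*n+1" and J: "J \<in> carrier_mat m m"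
    and J_antidiag: "\<And>i j. i < m \<Longrightarrow> j < m \<Longrightarrow> J $$ (i,j) \<noteq> 0 \<longleftrightarrow> i + j = m - 1"
    and J_inv: "\<And>\<rho> a b. paired_perm m n \<rho> \<Longrightarrow> a < m \<Longrightarrow> b < m \<Longrightarrow> J $$ (\<rho> a, \<rho> b) = J $$ (a,b)"
  shows "paired_monomial_group m n (isometry_group J m)"
proof
  fix w A assume w: "monomial_mat m w" "w \<in> isometry_group J m" and A: "A \<in> isometry_group J m"
  have w': "monomial_mat m (mono_inverse m w)" "mono_inverse m w \<in> isometry_group J m"
    using monomial_mono_inverse(1)[OF w(1)] isometry_group_mono_inverse[OF J w] by auto
  show "w * A * mono_inverse m w \<in> isometry_group J m"
    by (intro isometry_group_monomial_mult(1,2)[OF J] w w' A)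
  show "mono_inverse m w * A * w \<in> isometry_group J m"
    by (intro isometry_group_monomial_mult(1,2)[OF J] w w' A)
next
  fix \<rho> assume \<rho>: "paired_perm m n \<rho>"
  then show "\<exists>w\<in>isometry_group J m. monomial_mat m w \<and> (\<forall>j<m. mono_row m w j = \<rho> j)"
    using perm_mat_isometry_group[OF J paired_permD(1)[OF \<rho>] J_inv[OF \<rho>]]
      monomial_perm_mat[OF paired_permD(1)[OF \<rho>]] by blast
qed (use m isometry_group_pairing[OF J _ _ J_antidiag] in \<open>auto simp: isometry_group_def\<close>)

end

interpretation id_twist: field_twist "id :: 'k::field \<Rightarrow> 'k"
  by unfold_locales auto

lemma field_twist_power: "q > 0 \<Longrightarrow> field_twist (\<lambda>a::'k::field. a ^ q)"
  by unfold_locales (auto simp: power_mult_distrib)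

lemma antidiag_one_carrier: "antidiag_one m \<in> carrier_mat m m"
  unfolding antidiag_one_def by simp

lemma antidiag_one_nonzero_iff:
  "i < m \<Longrightarrow> j < m \<Longrightarrow> (antidiag_one m :: 'k::field mat) $$ (i,j) \<noteq> 0 \<longleftrightarrow> i + j = m - 1"
  unfolding antidiag_one_def by simp

lemma antidiag_one_paired_perm:
  assumes "paired_perm m n \<rho>" "a < m" "b < m"
  shows "(antidiag_one m :: 'k::field mat) $$ (\<rho> a, \<rho> b) = antidiag_one m $$ (a,b)"
  unfolding antidiag_one_def
  using assms paired_permD(2)[OF assms(1)] paired_perm_sum_eq_iff[OF assms] by simp

lemma symp_form_carrier: "symp_form n \<in> carrier_mat (2*n) (2*n)"
  unfolding symp_form_def by simp

lemma symp_form_nonzero_iff: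
  "i < 2*n \<Longrightarrow> j < 2*n \<Longrightarrow> (symp_form n :: 'k::field mat) $$ (i,j) \<noteq> 0 \<longleftrightarrow> i + j = 2*n - 1"
  unfolding symp_form_def by simp

lemma symp_form_paired_perm:
  assumes "paired_perm (2*n) n \<rho>" "a < 2*n" "b < 2*n"
  shows "(symp_form n :: 'k::field mat) $$ (\<rho> a, \<rho> b) = symp_form n $$ (a,b)"
  unfolding symp_form_def
  using assms paired_permD(2,4)[OF assms(1)] paired_perm_sum_eq_iff[OF assms] by simp

section \<open>The special orthogonal group\<close>

definition special_orthogonal :: "nat \<Rightarrow> 'k::field mat set" where
  "special_orthogonal n = {A \<in> carrier_mat (2*n+1) (2*n+1). det A = 1 \<and>
     (\<forall>v \<in> carrier_vec (2*n+1). qform n (A *\<^sub>v v) = qform n v)}"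

lemma special_orthogonal_mult:
  assumes A: "A \<in> special_orthogonal n" and B: "B \<in> special_orthogonal n"
  shows "A * B \<in> special_orthogonal n"
proof -
  let ?m = "2*n+1"
  have Ac: "A \<in> carrier_mat ?m ?m" and Bc: "B \<in> carrier_mat ?m ?m" and det: "det A = 1" "det B = 1"
    and qA: "\<And>v. v \<in> carrier_vec ?m \<Longrightarrow> qform n (A *\<^sub>v v) = qform n v"
    and qB: "\<And>v. v \<in> carrier_vec ?m \<Longrightarrow> qform n (B *\<^sub>v v) = qform n v"
    using A B unfolding special_orthogonal_def by auto
  have "qform n ((A * B) *\<^sub>v v) = qform n v" if v: "v \<in> carrier_vec ?m" for v
    using qA[OF mult_mat_vec_carrier[OF Bc v]] qB[OF v] assoc_mult_mat_vec[OF Ac Bc v] by simp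
  then show ?thesis
    using det_mult[OF Ac Bc] det Ac Bc unfolding special_orthogonal_def by auto
qed

lemma special_orthogonal_mono_inverse:
  assumes w: "monomial_mat (2*n+1) w" "w \<in> special_orthogonal n"
  shows "mono_inverse (2*n+1) w \<in> special_orthogonal n"
proof -
  let ?m = "2*n+1" and ?y = "mono_inverse (2*n+1) w"
  have wc: "w \<in> carrier_mat ?m ?m" and det_w: "det w = 1"
    and qw: "\<And>v. v \<in> carrier_vec ?m \<Longrightarrow> qform n (w *\<^sub>v v) = qform n v"
    using w unfolding special_orthogonal_def by auto
  have yc: "?y \<in> carrier_mat ?m ?m" by (rule mono_inverse_carrier)
  have "det w * det ?y = 1" using det_mult[OF wc yc] mult_mono_inverse[OF w(1)] by simp
  then have "det ?y = 1" using det_w by simp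
  moreover have "qform n (?y *\<^sub>v v) = qform n v" if v: "v \<in> carrier_vec ?m" for v
  proof -
    have "qform n (?y *\<^sub>v v) = qform n (w *\<^sub>v (?y *\<^sub>v v))"
      using qw[OF mult_mat_vec_carrier[OF yc v]] by simp
    also have "w *\<^sub>v (?y *\<^sub>v v) = v"
      using assoc_mult_mat_vec[OF wc yc v] mult_mono_inverse[OF w(1)] v by simp
    finally show ?thesis .
  qed
  ultimately show ?thesis unfolding special_orthogonal_def using yc by blast
qed

lemma qform_two_supported:
  fixes u :: "'k::field vec"
  assumes ij: "i < 2*n+1" "j < 2*n+1" "i \<noteq> n" "j \<noteq> n"
    and supp: "\<And>k. k < 2*n+1 \<Longrightarrow> k \<noteq> i \<Longrightarrow> k \<noteq> j \<Longrightarrow> u $ k = 0"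
  shows "qform n u = (if i + j = 2*n then u $ i * u $ j else 0)"
proof -
  have u_n: "u $ n = 0" using supp ij by auto
  have vanish: "u $ k * u $ (2*n - k) = 0" if k: "k < n" "k \<noteq> min i j \<or> i + j \<noteq> 2*n" for k
  proof (rule ccontr)
    assume nz: "u $ k * u $ (2*n - k) \<noteq> 0"
    have lt: "k < 2*n+1" "2*n - k < 2*n+1" using k(1) by auto
    have "k = i \<or> k = j" "2*n - k = i \<or> 2*n - k = j"
      using supp[OF lt(1)] supp[OF lt(2)] nz by auto
    then show False using k by auto
  qed
  show ?thesis
  proof (cases "i + j = 2*n")
    case True
    have k: "min i j < n" using True ij by auto
    have "(\<Sum>k<n. u $ k * u $ (2*n - k)) = u $ min i j * u $ (2*n - min i j)"
      using sum_atLeast0_single[OF k, of "\<lambda>k. u $ k * u $ (2*n - k)"] vanish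
      by (simp add: atLeast0LessThan)
    also have "\<dots> = u $ i * u $ j"
    proof -
      have "2*n - i = j" "2*n - j = i" using True by auto
      then show ?thesis by (cases "i \<le> j") (simp_all add: min_def mult.commute)
    qed
    finally show ?thesis unfolding qform_def using True u_n by simp
  next
    case False
    then have "(\<Sum>k<n. u $ k * u $ (2*n - k)) = 0" using vanish by (intro sum.neutral) simp
    then show ?thesis unfolding qform_def using False u_n by simp
  qed
qed

lemma qform_middle_supported:
  fixes u :: "'k::field vec"
  assumes "\<And>k. k < 2*n+1 \<Longrightarrow> k \<noteq> n \<Longrightarrow> u $ k = 0"
  shows "qform n u = u $ n * u $ n"
  unfolding qform_def using assms by simp

lemma monomial_special_orthogonal_middle:
  fixes w :: "'k::field mat"
  assumes w: "monomial_mat (2*n+1) w" "w \<in> special_orthogonal n"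
  shows "mono_row (2*n+1) w n = n"
proof (rule ccontr)
  let ?m = "2*n+1" and ?c = "mono_row (2*n+1) w n"
  assume c_n: "?c \<noteq> n"
  have c: "?c < ?m" using mono_row_spec(1)[OF w(1)] by simp
  define e :: "'k vec" where "e = unit_vec ?m n"
  have e: "e \<in> carrier_vec ?m" unfolding e_def by simp
  have "qform n (w *\<^sub>v e) = 0"
  proof (subst qform_two_supported[OF c c c_n c_n])
    fix k assume k: "k < ?m" "k \<noteq> ?c" "k \<noteq> ?c"
    have "mono_col ?m w k \<noteq> n" using k mono_row_col[OF w(1) k(1)] by auto
    then show "(w *\<^sub>v e) $ k = 0"
      unfolding monomial_mult_vec_index[OF w(1) e k(1)] using mono_col_spec(1)[OF w(1) k(1)]
      by (simp add: e_def)
  qed (use c_n in auto)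
  moreover have "qform n e = 1" by (subst qform_middle_supported) (auto simp: e_def)
  ultimately show False using w(2) e unfolding special_orthogonal_def by auto
qed

lemma monomial_special_orthogonal_pairing:
  fixes w :: "'k::field mat"
  assumes w: "monomial_mat (2*n+1) w" "w \<in> special_orthogonal n" and a: "a < 2*n+1"
  shows "mono_row (2*n+1) w (2*n - a) = 2*n - mono_row (2*n+1) w a"
proof (cases "a = n")
  case True
  then show ?thesis using monomial_special_orthogonal_middle[OF w] by simp
next
  case a_n: False
  let ?m = "2*n+1"
  define b where "b = 2*n - a"
  have b: "b < ?m" "b \<noteq> n" "b \<noteq> a" "a + b = 2*n" using a a_n unfolding b_def by auto
  let ?ra = "mono_row ?m w a" and ?rb = "mono_row ?m w b"
  have middle: "mono_row ?m w n = n" by (rule monomial_special_orthogonal_middle[OF w])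
  have row_ne_n: "mono_row ?m w k \<noteq> n" if "k < ?m" "k \<noteq> n" for k
    using mono_col_row[OF w(1) that(1)] mono_col_row[OF w(1), of n] middle that by force
  define v :: "'k vec" where "v = vec ?m (\<lambda>k. if k = a \<or> k = b then 1 else 0)"
  have v: "v \<in> carrier_vec ?m" unfolding v_def by simp
  have "qform n v = 1"
    by (subst qform_two_supported[OF a b(1) a_n b(2)]) (use b a in \<open>auto simp: v_def\<close>)
  moreover have ra: "?ra < ?m" "?ra \<noteq> n" and rb: "?rb < ?m" "?rb \<noteq> n"
    using mono_row_spec(1)[OF w(1)] row_ne_n a a_n b by auto
  have "qform n (w *\<^sub>v v) = (if ?ra + ?rb = 2*n then (w *\<^sub>v v) $ ?ra * (w *\<^sub>v v) $ ?rb else 0)"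
  proof (rule qform_two_supported[OF ra(1) rb(1) ra(2) rb(2)])
    fix k assume k: "k < ?m" "k \<noteq> ?ra" "k \<noteq> ?rb"
    have "mono_col ?m w k \<noteq> a" "mono_col ?m w k \<noteq> b"
      using k mono_row_col[OF w(1) k(1)] by auto
    then show "(w *\<^sub>v v) $ k = 0"
      unfolding monomial_mult_vec_index[OF w(1) v k(1)] using mono_col_spec(1)[OF w(1) k(1)]
      by (simp add: v_def)
  qed
  moreover have "qform n (w *\<^sub>v v) = qform n v"
    using w(2) v unfolding special_orthogonal_def by auto
  ultimately have "?ra + ?rb = 2*n" by (auto split: if_splits)
  then show ?thesis unfolding b_def by auto
qed

lemma perm_mat_mult_vec_index:
  fixes u :: "'k::field vec"
  assumes \<rho>: "bij_betw \<rho> {..<m} {..<m}" and u: "u \<in> carrier_vec m" and j: "j < m"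
  shows "(perm_mat m \<rho> *\<^sub>v u) $ \<rho> j = u $ j"
proof -
  have P: "monomial_mat m (perm_mat m \<rho> :: 'k mat)" by (rule monomial_perm_mat(1)[OF \<rho>])
  have "mono_col m (perm_mat m \<rho> :: 'k mat) (\<rho> j) = j"
    using mono_col_row[OF P j] monomial_perm_mat(2)[OF \<rho> j, where 'k = 'k] by simp
  moreover have "\<rho> j < m" using \<rho> j unfolding bij_betw_def by auto
  ultimately show ?thesis
    using monomial_mult_vec_index[OF P u] j by (simp add: perm_mat_index)
qed

lemma qform_perm_mat:
  assumes \<rho>: "paired_perm (2*n+1) n \<rho>" and u: "u \<in> carrier_vec (2*n+1)"
  shows "qform n (perm_mat (2*n+1) \<rho> *\<^sub>v u) = qform n (u :: 'k::field vec)"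
proof -
  let ?v = "perm_mat (2*n+1) \<rho> *\<^sub>v u"
  have v_\<rho>: "?v $ \<rho> j = u $ j" if "j < 2*n+1" for j
    by (rule perm_mat_mult_vec_index[OF paired_permD(1)[OF \<rho>] u that])
  have \<rho>_sym: "\<rho> (2*n - j) = 2*n - \<rho> j" if "j < 2*n+1" for j
    using paired_permD(3)[OF \<rho> that] by simp
  have \<rho>_n: "\<rho> n = n" using \<rho>_sym[of n] by simp
  have "bij_betw \<rho> {..<n} {..<n}" by (rule paired_perm_bij_lower[OF \<rho>]) simp
  then have "(\<Sum>k<n. ?v $ k * ?v $ (2*n - k)) = (\<Sum>j<n. ?v $ \<rho> j * ?v $ (2*n - \<rho> j))"
    by (rule sum.reindex_bij_betw[symmetric])
  also have "\<dots> = (\<Sum>j<n. u $ j * u $ (2*n - j))"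
    by (rule sum.cong) (use v_\<rho> \<rho>_sym in \<open>auto simp flip: \<rho>_sym\<close>)
  finally show ?thesis unfolding qform_def using v_\<rho>[of n] \<rho>_n by simp
qed

lemma qform_multrow_middle:
  assumes d: "d * d = 1" and u: "u \<in> carrier_vec (2*n+1)"
  shows "qform n (multrow_mat (2*n+1) n d *\<^sub>v u) = qform n (u :: 'k::field vec)"
proof -
  let ?v = "multrow_mat (2*n+1) n d *\<^sub>v u"
  have v: "?v $ i = (if i = n then d else 1) * u $ i" if i: "i < 2*n+1" for i
  proof -
    have "?v $ i = (\<Sum>k\<in>{0..<2*n+1}. multrow_mat (2*n+1) n d $$ (i,k) * u $ k)"
      using u i by (simp add: scalar_prod_def)
    also have "\<dots> = multrow_mat (2*n+1) n d $$ (i,i) * u $ i"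
      by (rule sum_atLeast0_single) (use i in auto)
    finally show ?thesis using i by simp
  qed
  have "(\<Sum>k<n. ?v $ k * ?v $ (2*n - k)) = (\<Sum>k<n. u $ k * u $ (2*n - k))"
  proof (rule sum.cong)
    fix k assume "k \<in> {..<n}"
    then show "?v $ k * ?v $ (2*n - k) = u $ k * u $ (2*n - k)" using v[of k] v[of "2*n - k"] by simp
  qed simp
  moreover have "?v $ n * ?v $ n = u $ n * u $ n"
    using v[of n] d by (simp add: algebra_simps)
  ultimately show ?thesis unfolding qform_def by simp
qed

lemma det_perm_mat_square:
  assumes \<rho>: "bij_betw \<rho> {..<m} {..<m}"
  shows "det (perm_mat m \<rho> :: 'k::field mat) * det (perm_mat m \<rho>) = 1"
proof -
  let ?P = "perm_mat m \<rho> :: 'k mat"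
  have Pc: "?P \<in> carrier_mat m m" unfolding perm_mat_def by simp
  have "(1\<^sub>m m :: 'k mat) $$ (\<rho> a, \<rho> b) = 1\<^sub>m m $$ (a,b)" if "a < m" "b < m" for a b
    using that bij_betw_apply[OF \<rho>] inj_on_eq_iff[of \<rho> "{..<m}" a b] \<rho>
    unfolding bij_betw_def by simp
  then have "?P \<in> id_twist.isometry_group (1\<^sub>m m) m"
    by (rule id_twist.perm_mat_isometry_group[OF one_carrier_mat \<rho>])
  then have "transpose_mat ?P * 1\<^sub>m m * ?P = 1\<^sub>m m"
    unfolding id_twist.isometry_group_def transpose_eq_twisted_transpose_id by simp
  then have "det (transpose_mat ?P) * det ?P = 1" using Pc by (simp flip: det_mult)
  then show ?thesis unfolding det_transpose[OF Pc] .
qed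

text \<open>Rescaling the middle coordinate by the determinant d = \<plusminus>1 of the permutation matrix
  preserves the form and makes the determinant 1.\<close>

lemma special_orthogonal_paired_perm:
  assumes \<rho>: "paired_perm (2*n+1) n \<rho>"
  shows "\<exists>w \<in> (special_orthogonal n :: 'k::field mat set). monomial_mat (2*n+1) w
    \<and> (\<forall>j<2*n+1. mono_row (2*n+1) w j = \<rho> j)"
proof -
  let ?m = "2*n+1"
  have bij: "bij_betw \<rho> {..<?m} {..<?m}" by (rule paired_permD(1)[OF \<rho>])
  define P :: "'k mat" where "P = perm_mat ?m \<rho>"
  define d where "d = det P"
  define D :: "'k mat" where "D = multrow_mat ?m n d"
  have Pc: "P \<in> carrier_mat ?m ?m" and Dc: "D \<in> carrier_mat ?m ?m"
    unfolding P_def D_def perm_mat_def by auto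
  have dd: "d * d = 1" unfolding d_def P_def by (rule det_perm_mat_square[OF bij])
  have PD_index: "(P * D) $$ (i,j) = (if i = \<rho> j then if j = n then d else 1 else 0)"
    if "i < ?m" "j < ?m" for i j
  proof -
    have "(P * D) $$ (i,j) = (\<Sum>k\<in>{0..<?m}. P $$ (i,k) * D $$ (k,j))"
      using that Pc Dc by (simp add: scalar_prod_def)
    also have "\<dots> = P $$ (i,j) * D $$ (j,j)"
      by (rule sum_atLeast0_single) (use that in \<open>auto simp: D_def\<close>)
    finally show ?thesis using that by (simp add: P_def D_def perm_mat_index)
  qed
  have d0: "d \<noteq> 0" using dd by auto
  have PD: "monomial_mat ?m (P * D)" "\<And>j. j < ?m \<Longrightarrow> mono_row ?m (P * D) j = \<rho> j"
    using monomial_mat_pattern[OF mult_carrier_mat[OF Pc Dc] bij] PD_index d0 by auto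
  have "det (P * D) = 1"
    using det_mult[OF Pc Dc] det_multrow_mat[of n ?m d] dd unfolding D_def d_def by simp
  moreover have "qform n ((P * D) *\<^sub>v v) = qform n v" if v: "v \<in> carrier_vec ?m" for v
    using qform_perm_mat[OF \<rho> mult_mat_vec_carrier[OF Dc v]] qform_multrow_middle[OF dd v]
      assoc_mult_mat_vec[OF Pc Dc v] unfolding P_def D_def by simp
  ultimately have "P * D \<in> special_orthogonal n"
    unfolding special_orthogonal_def using mult_carrier_mat[OF Pc Dc] by blast
  then show ?thesis using PD by blast
qed

lemma paired_monomial_group_special_orthogonal:
  "paired_monomial_group (2*n+1) n (special_orthogonal n :: 'k::field mat set)"
proof
  fix w A :: "'k mat"
  assume w: "monomial_mat (2*n+1) w" "w \<in> special_orthogonal n" and A: "A \<in> special_orthogonal n"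
  note w' = special_orthogonal_mono_inverse[OF w]
  show "w * A * mono_inverse (2*n+1) w \<in> special_orthogonal n"
    by (intro special_orthogonal_mult w w' A)
  show "mono_inverse (2*n+1) w * A * w \<in> special_orthogonal n"
    by (intro special_orthogonal_mult w w' A)
qed (use monomial_special_orthogonal_pairing special_orthogonal_paired_perm in
      \<open>auto simp: special_orthogonal_def\<close>)

section \<open>The four classical groups\<close>

lemma paired_monomial_group_classical_group:
  assumes q: "q > 0"
  shows "paired_monomial_group (cdim ty n) n (classical_group ty n q :: 'k::field mat set)"
proof -
  interpret frobenius: field_twist "\<lambda>a::'k. a ^ q" by (rule field_twist_power[OF q])
  have unitary: "paired_monomial_group m n (frobenius.isometry_group (antidiag_one m) m)"
    if "m = 2*n \<or> m = 2*n+1" for m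
    by (rule frobenius.paired_monomial_group_isometry_group[OF that antidiag_one_carrier
          antidiag_one_nonzero_iff antidiag_one_paired_perm])
  have symplectic: "paired_monomial_group (2*n) n (id_twist.isometry_group (symp_form n :: 'k mat) (2*n))"
    by (rule id_twist.paired_monomial_group_isometry_group[of "2*n" n, OF _ symp_form_carrier
          symp_form_nonzero_iff symp_form_paired_perm]) simp
  show ?thesis
  proof (cases ty)
    case GU_even
    then show ?thesis using unitary[of "2*n"]
      by (simp add: frobenius.isometry_group_def conj_transp_eq_twisted_transpose)
  next
    case GU_odd
    then show ?thesis using unitary[of "2*n+1"]
      by (simp add: frobenius.isometry_group_def conj_transp_eq_twisted_transpose)
  next
    case SO_odd
    then show ?thesis using paired_monomial_group_special_orthogonal
      by (simp add: special_orthogonal_def)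
  next
    case Sp_even
    then show ?thesis using symplectic
      by (simp add: id_twist.isometry_group_def transpose_eq_twisted_transpose_id)
  qed
qed

lemma std_levi_eq_block_levi:
  "std_levi ty n q r = block_levi (classical_group ty n q) (cdim ty n) (central_block (cdim ty n) n r)"
proof -
  have outside: "i \<notin> central_block m n r \<or> j \<notin> central_block m n r
      \<longleftrightarrow> i < n - r \<or> j < n - r \<or> m - (n - r) \<le> i \<or> m - (n - r) \<le> j" for m i j
    unfolding central_block_def by auto
  show ?thesis unfolding std_levi_def block_levi_def outside ..
qed

theorem proposition2p2:
  fixes ty :: ctype and n q p :: nat and L M :: "'k::{field,finite} mat set" and x :: "'k mat"
  assumes "prime p" and "\<exists>e\<ge>1. q = p ^ e" and "n \<ge> 1"
    and "card (UNIV :: 'k set) = (if ty = GU_even \<or> ty = GU_odd then q ^ 2 else q)"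
    and "pure_levi ty n q L" and "pure_levi ty n q M"
    and "x \<in> Ngrp ty n q"
  shows "pure_levi ty n q (conj_set (cdim ty n) x L \<inter> M)"
proof -
  have "q > 0" using assms(1,2) prime_gt_0_nat by auto
  then interpret paired_monomial_group "cdim ty n" n "classical_group ty n q :: 'k mat set"
    by (rule paired_monomial_group_classical_group)
  have pure_iff: "pure_levi ty n q H \<longleftrightarrow> pure_block_levi H" for H
    unfolding pure_levi_def pure_block_levi_def Ngrp_def std_levi_eq_block_levi by blast
  show ?thesis
    using pure_block_levi_conj_Int assms(5-7) unfolding pure_iff Ngrp_def by blast
qed

end
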